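(* Let $G=(X,Y,E)$ be a bipartite graph with non-negative weights $\omega_e$ on its edges $e\in E$ and positive integer weights $s_x$ on its vertices $x\in X$ such that $\sum_{x\in X}s_x\ge|E|$. Suppose that for all $x\in X$ and all $y\in Y$, $$\sum_{e\in\delta_G(x)}\omega_e>\frac{s_x-1}{|Y|}\qquad\text{and}\qquad\sum_{e\in\delta_G(y)}\omega_e=\frac{1}{|Y|}.$$ Then every vertex $x\in X$ has degree exactly $s_x$ in $G$.
   Context: $\delta_G(z)$ denotes the set of edges of $G$ incident to the vertex $z$. *)

theory Defs
  imports Complex_Main
begin

text \<open>A bipartite graph G = (X, Y, E) with sides X, Y is represented by an edge set
  E \<subseteq> X \<times> Y; an edge (x, y) joins x \<in> X and y \<in> Y.
  delta_G(z): the set of edges incident to z.\<close>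

definition deltaX :: "('a \<times> 'b) set \<Rightarrow> 'a \<Rightarrow> ('a \<times> 'b) set" where
  "deltaX E x = {e \<in> E. fst e = x}"

definition deltaY :: "('a \<times> 'b) set \<Rightarrow> 'b \<Rightarrow> ('a \<times> 'b) set" where
  "deltaY E y = {e \<in> E. snd e = y}"

end

theory Submission
  imports Defs
begin

text \<open>Every edge carries weight at most 1/|Y|, the total weight at its endpoint in Y.
  Hence the weight bound at x forces deg x > s x - 1, i.e. deg x \<ge> s x.
  Summing over X, |E| = \<Sum> deg x \<ge> \<Sum> s x \<ge> |E|, so every one of these inequalities is tight.\<close>

lemma card_eq_sum_card_deltaX:
  assumes "finite X" and "finite E" and "fst ` E \<subseteq> X"
  shows "card E = (\<Sum>x\<in>X. card (deltaX E x))"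
proof -
  have "E = (\<Union>x\<in>X. deltaX E x)" using assms(3) by (auto simp: deltaX_def)
  moreover have "card (\<Union>x\<in>X. deltaX E x) = (\<Sum>x\<in>X. card (deltaX E x))"
    using assms(1,2) by (intro card_UN_disjoint) (auto simp: deltaX_def)
  ultimately show ?thesis by simp
qed

lemma weight_le_sum_deltaY:
  fixes \<omega> :: "'a \<times> 'b \<Rightarrow> 'c::{semiring_1, ordered_comm_monoid_add}"
  assumes "finite E" and "\<forall>e\<in>E. \<omega> e \<ge> 0" and "e \<in> E"
  shows "\<omega> e \<le> (\<Sum>e'\<in>deltaY E (snd e). \<omega> e')"
  using assms by (intro member_le_sum) (auto simp: deltaY_def)

lemma sum_deltaX_le_card_mult:
  fixes \<omega> :: "'a \<times> 'b \<Rightarrow> real"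
  assumes "\<forall>e\<in>E. \<omega> e \<le> c"
  shows "(\<Sum>e\<in>deltaX E x. \<omega> e) \<le> real (card (deltaX E x)) * c"
proof -
  have "(\<Sum>e\<in>deltaX E x. \<omega> e) \<le> (\<Sum>e\<in>deltaX E x. c)"
    using assms by (intro sum_mono) (auto simp: deltaX_def)
  then show ?thesis by simp
qed

lemma nat_le_if_pred_div_less:
  fixes a b :: nat and c :: real
  assumes "0 \<le> c" and "(real a - 1) / c < real b / c"
  shows "a \<le> b"
proof -
  have "c > 0" using assms by (cases "c = 0") auto
  then have "real a - 1 < real b" using assms(2) by (simp add: divide_less_cancel)
  then show ?thesis by linarith
qed

theorem lemma2p8:
  fixes X :: "'a set" and Y :: "'b set" and E :: "('a \<times> 'b) set"
    and \<omega> :: "'a \<times> 'b \<Rightarrow> real" and s :: "'a \<Rightarrow> nat"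
  assumes "finite X" and "finite Y" and "E \<subseteq> X \<times> Y"
    and "\<forall>e\<in>E. \<omega> e \<ge> 0"
    and "\<forall>x\<in>X. s x > 0"
    and "(\<Sum>x\<in>X. s x) \<ge> card E"
    and "\<forall>x\<in>X. (\<Sum>e\<in>deltaX E x. \<omega> e) > (real (s x) - 1) / real (card Y)"
    and "\<forall>y\<in>Y. (\<Sum>e\<in>deltaY E y. \<omega> e) = 1 / real (card Y)"
  shows "\<forall>x\<in>X. card (deltaX E x) = s x"
proof
  have fin_E: "finite E" using assms(1-3) finite_subset by blast
  have weight_le: "\<forall>e\<in>E. \<omega> e \<le> 1 / real (card Y)"
    using weight_le_sum_deltaY[OF fin_E assms(4)] assms(3,8) by fastforce
  have s_le_deg: "s x \<le> card (deltaX E x)" if "x \<in> X" for x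
  proof (rule nat_le_if_pred_div_less)
    show "(real (s x) - 1) / real (card Y) < real (card (deltaX E x)) / real (card Y)"
      using assms(7) that sum_deltaX_le_card_mult[OF weight_le, of x] by force
  qed simp
  have "(\<Sum>x\<in>X. card (deltaX E x)) = card E"
    using card_eq_sum_card_deltaX[OF assms(1) fin_E] assms(3) by force
  also have "\<dots> \<le> (\<Sum>x\<in>X. s x)" by (fact assms(6))
  finally have "(\<Sum>x\<in>X. s x) = (\<Sum>x\<in>X. card (deltaX E x))"
    using sum_mono[of X s "\<lambda>x. card (deltaX E x)"] s_le_deg by simp
  then show "card (deltaX E x) = s x" if "x \<in> X" for x
    using sum_mono_inv[of s X "\<lambda>x. card (deltaX E x)"] s_le_deg that assms(1) by simp
qed

end
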